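(* Let $p\ge1$, let $T\subset\mathbb{R}^{\lfloor p\rfloor}$ be a bounded set whose linear span is $\mathbb{R}^{\lfloor p\rfloor}$, and let $Z_1,\dots,Z_{\lfloor p\rfloor}$ be arbitrary random variables. Then $$\mathbb{E}\sup_{x\in T}\Big|\sum_{i\le p}x_iZ_i\Big|\le\Big(\mathbb{E}\sup_{x\in T}\Big|\sum_{i\le p}x_iZ_i\Big|^p\Big)^{1/p}\le10\sup_{x\in T}\Big\|\sum_{i\le p}x_iZ_i\Big\|_p.$$
   Context: $\|Z\|_p=(\mathbb{E}|Z|^p)^{1/p}$. *)

theory Defs
  imports "HOL-Analysis.Analysis" "HOL-Probability.Probability"
begin

(* a powr q for extended nonnegative reals, intended for q > 0: \<infinity> powr q = \<infinity> *)
definition enn_powr :: "ennreal \<Rightarrow> real \<Rightarrow> ennreal" where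
  "enn_powr a q = (if a = \<top> then \<top> else ennreal (enn2real a powr q))"

definition Lp_norm :: "'a measure \<Rightarrow> real \<Rightarrow> ('a \<Rightarrow> real) \<Rightarrow> ennreal" where
  "Lp_norm M p f = enn_powr (\<integral>\<^sup>+ \<omega>. ennreal (\<bar>f \<omega>\<bar> powr p) \<partial>M) (1 / p)"

end

(* The first inequality is Lyapunov's: integrating the tangent line of t powr p at
   c = (E F^p)^(1/p) gives E F <= c.

   For the second, write S = sup_T |<x, Z>| and let K be the convex hull of T and -T, a
   bounded symmetric convex body because T spans the space. A maximal subset N of T with
   2(x - y) not in K for distinct x, y has at most 5^d <= 5^p points, since the translates
   x + K/4 are disjoint and lie in 5K/4; by maximality every z in T has some x in N with
   2(z - x) in K. As |<., Z>| <= S on K, this gives S <= max_N |<x, Z>| + S/2, so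
   S^p <= 2^p sum_N |<x, Z>|^p, and taking expectations
   ||S||_p <= 2 |N|^(1/p) sup_T ||<x, Z>||_p <= 10 sup_T ||<x, Z>||_p. *)

theory Submission
  imports Defs
begin

lemma powr_inverse_le_iff:
  fixes a p r :: real
  assumes "p > 0" "a \<ge> 0" "r \<ge> 0"
  shows "r powr (1 / p) \<le> a \<longleftrightarrow> r \<le> a powr p"
proof
  assume "r powr (1 / p) \<le> a"
  then have "(r powr (1 / p)) powr p \<le> a powr p"
    using assms by (intro powr_mono2) auto
  then show "r \<le> a powr p" using assms by (simp add: powr_powr)
next
  assume "r \<le> a powr p"
  then have "r powr (1 / p) \<le> (a powr p) powr (1 / p)"
    using assms by (intro powr_mono2) auto
  then show "r powr (1 / p) \<le> a" using assms by (simp add: powr_powr)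
qed

lemma enn_powr_ennreal: "a \<ge> 0 \<Longrightarrow> enn_powr (ennreal a) q = ennreal (a powr q)"
  by (simp add: enn_powr_def)

lemma enn_powr_inverse_le_iff:
  assumes "p > 0" "a \<ge> 0"
  shows "enn_powr X (1 / p) \<le> ennreal a \<longleftrightarrow> X \<le> ennreal (a powr p)"
proof (cases X)
  case (real r)
  then show ?thesis
    using assms powr_inverse_le_iff[OF assms(1,2), of r] by (simp add: enn_powr_ennreal)
qed (simp add: enn_powr_def top_unique)

lemma powr_le_tangent_line:
  fixes a c p :: real
  assumes "a \<ge> 0" "c > 0" "p \<ge> 1"
  shows "a \<le> c + (a powr p - c powr p) / (p * c powr (p - 1))"
proof -
  have slope_pos: "p * c powr (p - 1) > 0" using assms by auto
  have "p * c powr (p - 1) * (a - c) \<le> a powr p - c powr p"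
  proof (cases "a = 0")
    case True
    have "c powr p = c * c powr (p - 1)" using assms by (simp add: powr_mult_base)
    then show ?thesis using True assms slope_pos by (simp add: algebra_simps mult_right_mono)
  next
    case False
    show ?thesis
    proof (rule convex_on_imp_above_tangent[OF powr_convex[OF assms(3)]])
      show "connected {0::real<..}" by simp
      show "c \<in> interior {0<..}" using assms by (simp add: interior_open)
      show "a \<in> {0<..}" using False assms by simp
      show "((\<lambda>x. x powr p) has_field_derivative p * c powr (p - 1)) (at c within {0<..})"
        using assms by (auto intro!: derivative_eq_intros)
    qed
  qed
  then have "a - c \<le> (a powr p - c powr p) / (p * c powr (p - 1))"
    using slope_pos by (simp add: pos_le_divide_eq mult.commute)
  then show ?thesis by simp
qed

lemma (in prob_space) nn_integral_le_powr_expectation: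
  fixes F :: "'a \<Rightarrow> real"
  assumes F_meas: "F \<in> borel_measurable M" and F_nonneg: "\<And>\<omega>. F \<omega> \<ge> 0" and "p \<ge> 1"
    and int_Fp: "integrable M (\<lambda>\<omega>. F \<omega> powr p)"
  shows "(\<integral>\<^sup>+ \<omega>. ennreal (F \<omega>) \<partial>M) \<le> ennreal (expectation (\<lambda>\<omega>. F \<omega> powr p) powr (1 / p))"
proof -
  define J where "J = expectation (\<lambda>\<omega>. F \<omega> powr p)"
  have "J \<ge> 0" unfolding J_def by simp
  show ?thesis
  proof (cases "J = 0")
    case True
    then have "AE \<omega> in M. F \<omega> powr p = 0"
      using integral_nonneg_eq_0_iff_AE[OF int_Fp] by (simp add: J_def)
    then have "(\<integral>\<^sup>+ \<omega>. ennreal (F \<omega>) \<partial>M) = (\<integral>\<^sup>+ \<omega>. 0 \<partial>M)"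
      by (intro nn_integral_cong_AE) auto
    then show ?thesis by simp
  next
    case False
    define c where "c = J powr (1 / p)"
    have "c > 0" using False \<open>J \<ge> 0\<close> by (simp add: c_def)
    have "c powr p = J" using False \<open>J \<ge> 0\<close> \<open>p \<ge> 1\<close> by (simp add: c_def powr_powr)
    define h where "h = (\<lambda>\<omega>. c + (F \<omega> powr p - c powr p) / (p * c powr (p - 1)))"
    have F_le_h: "F \<omega> \<le> h \<omega>" for \<omega>
      unfolding h_def using powr_le_tangent_line[OF F_nonneg \<open>c > 0\<close> \<open>p \<ge> 1\<close>] by simp
    have "(\<integral>\<^sup>+ \<omega>. ennreal (F \<omega>) \<partial>M) \<le> (\<integral>\<^sup>+ \<omega>. ennreal (h \<omega>) \<partial>M)"
      using F_le_h by (intro nn_integral_mono ennreal_leI)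
    also have "\<dots> = ennreal (expectation h)"
      using int_Fp F_le_h F_nonneg unfolding h_def
      by (intro nn_integral_eq_integral) (auto intro: order_trans)
    also have "expectation h = c"
      using int_Fp \<open>c powr p = J\<close> by (simp add: h_def J_def prob_space)
    finally show ?thesis by (simp add: c_def J_def)
  qed
qed

lemma (in prob_space) nn_integral_le_Lp_norm:
  fixes F :: "'a \<Rightarrow> real"
  assumes "F \<in> borel_measurable M" "\<And>\<omega>. F \<omega> \<ge> 0" "p \<ge> 1"
  shows "(\<integral>\<^sup>+ \<omega>. ennreal (F \<omega>) \<partial>M) \<le> Lp_norm M p F"
proof (cases "(\<integral>\<^sup>+ \<omega>. ennreal (F \<omega> powr p) \<partial>M) = \<top>")
  case True
  then show ?thesis using assms(2) by (simp add: Lp_norm_def enn_powr_def)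
next
  case False
  have "(\<lambda>\<omega>. F \<omega> powr p) \<in> borel_measurable M" using assms(1) by measurable
  then have "integrable M (\<lambda>\<omega>. F \<omega> powr p)"
    using False by (intro integrableI_nonneg) (auto simp: less_top)
  moreover have "(\<integral>\<^sup>+ \<omega>. ennreal (F \<omega> powr p) \<partial>M) = ennreal (expectation (\<lambda>\<omega>. F \<omega> powr p))"
    using calculation by (intro nn_integral_eq_integral) auto
  ultimately show ?thesis
    using nn_integral_le_powr_expectation[OF assms] assms(2)
    by (simp add: Lp_norm_def enn_powr_ennreal)
qed

lemma Lp_norm_le_of_powr_le_sum:
  fixes F :: "'a \<Rightarrow> real" and g :: "'i \<Rightarrow> 'a \<Rightarrow> real"
  assumes "finite N" "p > 0" "C \<ge> 0" "a \<ge> 0"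
    and g_meas: "\<And>x. x \<in> N \<Longrightarrow> g x \<in> borel_measurable M"
    and Lp_g: "\<And>x. x \<in> N \<Longrightarrow> Lp_norm M p (g x) \<le> ennreal a"
    and F_le: "\<And>\<omega>. \<bar>F \<omega>\<bar> powr p \<le> C powr p * (\<Sum>x\<in>N. \<bar>g x \<omega>\<bar> powr p)"
  shows "Lp_norm M p F \<le> ennreal (C * real (card N) powr (1 / p) * a)"
proof -
  have moment_meas: "(\<lambda>\<omega>. ennreal (\<bar>g x \<omega>\<bar> powr p)) \<in> borel_measurable M" if "x \<in> N" for x
    using g_meas[OF that] by measurable
  have moment_g: "(\<integral>\<^sup>+ \<omega>. ennreal (\<bar>g x \<omega>\<bar> powr p) \<partial>M) \<le> ennreal (a powr p)" if "x \<in> N" for x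
    using Lp_g[OF that] enn_powr_inverse_le_iff[OF \<open>p > 0\<close> \<open>a \<ge> 0\<close>] by (simp add: Lp_norm_def)
  have pointwise: "ennreal (\<bar>F \<omega>\<bar> powr p) \<le> ennreal (C powr p) * (\<Sum>x\<in>N. ennreal (\<bar>g x \<omega>\<bar> powr p))"
    for \<omega>
    using ennreal_leI[OF F_le[of \<omega>]] by (simp add: ennreal_mult sum_nonneg)
  have "(\<integral>\<^sup>+ \<omega>. ennreal (\<bar>F \<omega>\<bar> powr p) \<partial>M)
      \<le> (\<integral>\<^sup>+ \<omega>. ennreal (C powr p) * (\<Sum>x\<in>N. ennreal (\<bar>g x \<omega>\<bar> powr p)) \<partial>M)"
    using pointwise by (rule nn_integral_mono)
  also have "\<dots> = ennreal (C powr p) * (\<integral>\<^sup>+ \<omega>. (\<Sum>x\<in>N. ennreal (\<bar>g x \<omega>\<bar> powr p)) \<partial>M)"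
    by (intro nn_integral_cmult borel_measurable_sum moment_meas)
  also have "\<dots> = ennreal (C powr p) * (\<Sum>x\<in>N. \<integral>\<^sup>+ \<omega>. ennreal (\<bar>g x \<omega>\<bar> powr p) \<partial>M)"
    by (simp only: nn_integral_sum[OF moment_meas])
  also have "\<dots> \<le> ennreal (C powr p) * (\<Sum>x\<in>N. ennreal (a powr p))"
    using moment_g by (intro mult_left_mono sum_mono) auto
  also have "\<dots> = ennreal (C powr p * real (card N) * a powr p)"
    by (simp add: ennreal_mult ennreal_of_nat_eq_real_of_nat mult.assoc)
  also have "C powr p * real (card N) * a powr p = (C * real (card N) powr (1 / p) * a) powr p"
  proof -
    have "(real (card N) powr (1 / p)) powr p = real (card N)" using \<open>p > 0\<close> by (simp add: powr_powr)
    then show ?thesis using \<open>C \<ge> 0\<close> \<open>a \<ge> 0\<close> by (simp add: powr_mult)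
  qed
  finally have "(\<integral>\<^sup>+ \<omega>. ennreal (\<bar>F \<omega>\<bar> powr p) \<partial>M) \<le> ennreal ((C * real (card N) powr (1 / p) * a) powr p)" .
  moreover have "C * real (card N) powr (1 / p) * a \<ge> 0" using \<open>C \<ge> 0\<close> \<open>a \<ge> 0\<close> by simp
  ultimately show ?thesis
    unfolding Lp_norm_def by (simp only: enn_powr_inverse_le_iff[OF \<open>p > 0\<close>])
qed

lemma quarter_translates_disjnt:
  fixes K :: "'a::real_vector set"
  assumes "convex K" and K_symmetric: "\<And>y. y \<in> K \<Longrightarrow> - y \<in> K" and "2 *\<^sub>R (x - y) \<notin> K"
  shows "disjnt ((\<lambda>k. (1/4::real) *\<^sub>R k + x) ` K) ((\<lambda>k. (1/4::real) *\<^sub>R k + y) ` K)"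
proof -
  have "2 *\<^sub>R (x - y) \<in> K"
    if "k \<in> K" "k' \<in> K" "(1/4::real) *\<^sub>R k + x = (1/4::real) *\<^sub>R k' + y" for k k'
  proof -
    have "2 *\<^sub>R (x - y) = 2 *\<^sub>R (((1/4::real) *\<^sub>R k + x) - ((1/4::real) *\<^sub>R k + y))"
      by simp
    also have "\<dots> = 2 *\<^sub>R (((1/4::real) *\<^sub>R k' + y) - ((1/4::real) *\<^sub>R k + y))"
      by (simp only: that(3))
    also have "\<dots> = (1/2::real) *\<^sub>R k' + (1/2::real) *\<^sub>R (- k)"
      by (simp add: algebra_simps)
    finally show ?thesis
      using convexD[OF \<open>convex K\<close> \<open>k' \<in> K\<close> K_symmetric[OF \<open>k \<in> K\<close>]] by simp
  qed
  then show ?thesis using assms(3) by (auto simp: disjnt_def)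
qed

lemma quarter_translate_subset:
  fixes K :: "'a::real_vector set"
  assumes "convex K" "x \<in> K"
  shows "(\<lambda>k. (1/4::real) *\<^sub>R k + x) ` K \<subseteq> (\<lambda>k. (5/4::real) *\<^sub>R k) ` K"
proof
  fix z assume "z \<in> (\<lambda>k. (1/4::real) *\<^sub>R k + x) ` K"
  then obtain k where "k \<in> K" and z: "z = (1/4::real) *\<^sub>R k + x" by auto
  have "(4/5::real) *\<^sub>R x + (1/5::real) *\<^sub>R k \<in> K"
    using convexD[OF assms \<open>k \<in> K\<close>] by simp
  moreover have "z = (5/4::real) *\<^sub>R ((4/5::real) *\<^sub>R x + (1/5::real) *\<^sub>R k)"
    using z by (simp add: scaleR_add_right)
  ultimately show "z \<in> (\<lambda>k. (5/4::real) *\<^sub>R k) ` K" by blast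
qed

lemma card_separated_subset_le:
  fixes K :: "'a::euclidean_space set"
  assumes "convex K" "bounded K" "interior K \<noteq> {}" "\<And>y. y \<in> K \<Longrightarrow> - y \<in> K"
    and "N \<subseteq> K" "finite N" "pairwise (\<lambda>x y. 2 *\<^sub>R (x - y) \<notin> K) N"
  shows "card N \<le> 5 ^ DIM('a)"
proof -
  define B where "B x = (\<lambda>k. (1/4::real) *\<^sub>R k + x) ` K" for x
  define C where "C = (\<lambda>k. (5/4::real) *\<^sub>R k) ` K"
  have "K \<in> lmeasurable" using assms(1,2) by (rule measurable_convex)
  have affine_lmeasurable: "(\<lambda>k. r *\<^sub>R k + x) ` K \<in> lmeasurable" for r :: real and x
  proof -
    have "(\<lambda>k. r *\<^sub>R k + x) ` K = (\<lambda>y. x + y) ` ((\<lambda>k. r *\<^sub>R k) ` K)"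
      by (auto simp: image_image add.commute)
    then show ?thesis
      using convex_affinity[OF assms(1), of x r] bounded_translation[OF bounded_scaling[OF assms(2)]]
      by (auto simp: image_image intro: measurable_convex)
  qed
  have "measure lebesgue K > 0"
    using assms(3) negligible_convex_interior[OF assms(1)] negligible_iff_measure0[OF \<open>K \<in> lmeasurable\<close>]
    by (simp add: less_le)
  have "real (card N) * ((1/4) ^ DIM('a) * measure lebesgue K) = (\<Sum>x\<in>N. measure lebesgue (B x))"
    by (simp add: B_def measure_lebesgue_affine)
  also have "\<dots> = measure lebesgue (\<Union>x\<in>N. B x)"
    using assms(6,7) affine_lmeasurable
    by (intro measure_UNION'[symmetric])
      (auto simp: B_def elim!: pairwise_mono intro: quarter_translates_disjnt[OF assms(1,4)])
  also have "\<dots> \<le> measure lebesgue C"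
  proof (rule measure_mono_fmeasurable)
    show "(\<Union>x\<in>N. B x) \<subseteq> C"
      using assms(5) quarter_translate_subset[OF assms(1)] unfolding B_def C_def by blast
    show "(\<Union>x\<in>N. B x) \<in> sets lebesgue"
      using assms(6) affine_lmeasurable by (auto simp: B_def)
    show "C \<in> lmeasurable" using affine_lmeasurable[of "5/4" 0] by (simp add: C_def)
  qed
  also have "\<dots> = (5/4) ^ DIM('a) * measure lebesgue K"
    using measure_lebesgue_affine[of "5/4" 0 K] by (simp add: C_def)
  finally have "real (card N) * (1/4) ^ DIM('a) \<le> (5/4) ^ DIM('a)"
    using \<open>measure lebesgue K > 0\<close> by (simp add: mult.assoc[symmetric])
  then have "real (card N) \<le> 5 ^ DIM('a)"
    by (simp add: field_simps)
  then show ?thesis by (simp flip: of_nat_le_iff)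
qed

lemma convex_hull_symmetric:
  fixes A :: "'a::real_vector set"
  assumes "\<And>x. x \<in> A \<Longrightarrow> - x \<in> A" and "y \<in> convex hull A"
  shows "- y \<in> convex hull A"
proof -
  have "uminus ` A = A" using assms(1) by (auto intro: image_eqI[where x="- _"])
  then have "uminus ` (convex hull A) = convex hull A"
    using convex_hull_linear_image[OF linear_uminus, of A] by simp
  then show ?thesis using assms(2) by blast
qed

lemma convex_interior_nonempty:
  fixes K :: "'a::euclidean_space set"
  assumes "convex K" "0 \<in> K" "span K = UNIV"
  shows "interior K \<noteq> {}"
proof -
  have "affine hull K = span K"
    using assms(2) hull_subset[of K affine] by (intro affine_hull_span_0) auto
  then have "rel_interior K = interior K"
    using assms(3) by (intro rel_interior_interior) simp
  moreover have "rel_interior K \<noteq> {}" using rel_interior_eq_empty[OF assms(1)] assms(2) by auto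
  ultimately show ?thesis by simp
qed

lemma exists_maximal_pairwise_subset:
  assumes "\<And>N. N \<subseteq> T \<Longrightarrow> finite N \<Longrightarrow> pairwise R N \<Longrightarrow> card N \<le> b"
  obtains N where "N \<subseteq> T" "finite N" "pairwise R N"
    "\<And>z. z \<in> T \<Longrightarrow> z \<notin> N \<Longrightarrow> \<exists>x\<in>N. \<not> (R z x \<and> R x z)"
proof -
  let ?P = "\<lambda>N. N \<subseteq> T \<and> finite N \<and> pairwise R N"
  obtain N where N: "?P N" and N_max: "\<And>N'. ?P N' \<Longrightarrow> card N' \<le> card N"
    using ex_has_greatest_nat[of ?P "{}" card "Suc b"] assms by (force simp: less_Suc_eq_le)
  have "\<exists>x\<in>N. \<not> (R z x \<and> R x z)" if "z \<in> T" "z \<notin> N" for z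
  proof (rule ccontr)
    assume "\<not> ?thesis"
    then have "?P (insert z N)" using N that by (auto simp: pairwise_insert)
    then show False using N_max[of "insert z N"] N that by simp
  qed
  with N that show ?thesis by blast
qed

lemma symmetric_hull_net:
  fixes T :: "'a::euclidean_space set"
  assumes "bounded T" "span T = UNIV"
  obtains N where "N \<subseteq> T" "finite N" "card N \<le> 5 ^ DIM('a)"
    "\<And>z. z \<in> T \<Longrightarrow> \<exists>x\<in>N. 2 *\<^sub>R (z - x) \<in> convex hull (T \<union> uminus ` T)"
proof -
  define K where "K = convex hull (T \<union> uminus ` T)"
  have "T \<subseteq> K" unfolding K_def by (meson hull_subset le_supE)
  have K_symmetric: "- y \<in> K" if "y \<in> K" for y
    using that unfolding K_def by (intro convex_hull_symmetric) (auto simp: image_iff)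
  have "T \<noteq> {}" using assms(2) span_empty by blast
  then obtain t where "t \<in> T" by blast
  have "(1/2::real) *\<^sub>R t + (1/2::real) *\<^sub>R (- t) \<in> K"
    using \<open>t \<in> T\<close> \<open>T \<subseteq> K\<close> K_symmetric by (intro convexD) (auto simp: K_def)
  then have "0 \<in> K" by simp
  have "convex K" "bounded K"
    using assms(1) by (auto simp: K_def intro!: bounded_convex_hull)
  moreover have "interior K \<noteq> {}"
    using \<open>convex K\<close> \<open>0 \<in> K\<close> span_mono[OF \<open>T \<subseteq> K\<close>] assms(2)
    by (intro convex_interior_nonempty) auto
  ultimately have card_le: "card N \<le> 5 ^ DIM('a)"
    if "N \<subseteq> T" "finite N" "pairwise (\<lambda>x y. 2 *\<^sub>R (x - y) \<notin> K) N" for N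
    using that \<open>T \<subseteq> K\<close> K_symmetric by (intro card_separated_subset_le) auto
  obtain N where N: "N \<subseteq> T" "finite N" "pairwise (\<lambda>x y. 2 *\<^sub>R (x - y) \<notin> K) N"
    and N_max: "\<And>z. z \<in> T \<Longrightarrow> z \<notin> N \<Longrightarrow> \<exists>x\<in>N. \<not> (2 *\<^sub>R (z - x) \<notin> K \<and> 2 *\<^sub>R (x - z) \<notin> K)"
    using exists_maximal_pairwise_subset[OF card_le] by blast
  have "\<exists>x\<in>N. 2 *\<^sub>R (z - x) \<in> K" if z: "z \<in> T" for z
  proof (cases "z \<in> N")
    case True
    then show ?thesis using \<open>0 \<in> K\<close> by (intro bexI[of _ z]) auto
  next
    case False
    then obtain x where "x \<in> N" "2 *\<^sub>R (z - x) \<in> K \<or> 2 *\<^sub>R (x - z) \<in> K"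
      using N_max[OF z False] by blast
    moreover have "- (2 *\<^sub>R (x - z)) = 2 *\<^sub>R (z - x)" by (simp add: algebra_simps)
    ultimately show ?thesis using K_symmetric by metis
  qed
  then show ?thesis using that N card_le unfolding K_def by blast
qed

lemma abs_inner_le_on_convex_hull:
  assumes "\<And>x. x \<in> A \<Longrightarrow> \<bar>x \<bullet> w\<bar> \<le> r" and "y \<in> convex hull A"
  shows "\<bar>y \<bullet> w\<bar> \<le> r"
proof -
  have "convex hull A \<subseteq> {x. \<bar>w \<bullet> x\<bar> \<le> r}"
    using assms(1) by (intro hull_minimal convex_halfspace_abs_le) (auto simp: inner_commute)
  then show ?thesis using assms(2) by (auto simp: inner_commute)
qed

lemma bdd_above_abs_inner:
  fixes T :: "'a::real_inner set"
  assumes "bounded T"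
  shows "bdd_above ((\<lambda>x. \<bar>x \<bullet> w\<bar>) ` T)"
proof -
  obtain B where B: "\<And>x. x \<in> T \<Longrightarrow> norm x \<le> B" using assms bounded_iff by blast
  have "\<bar>x \<bullet> w\<bar> \<le> B * norm w" if "x \<in> T" for x
    using Cauchy_Schwarz_ineq2[of x w] mult_right_mono[OF B[OF that] norm_ge_zero[of w]] by linarith
  then show ?thesis by (intro bdd_aboveI2)
qed

lemma SUP_abs_inner_nonneg:
  fixes T :: "'a::real_inner set"
  assumes "bounded T" "T \<noteq> {}"
  shows "0 \<le> (SUP x\<in>T. \<bar>x \<bullet> w\<bar>)"
  using assms(2) bdd_above_abs_inner[OF assms(1)] by (auto intro: cSUP_upper2)

lemma ennreal_SUP_abs_inner:
  fixes T :: "'a::real_inner set"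
  assumes "bounded T" "T \<noteq> {}"
  shows "(SUP x\<in>T. ennreal \<bar>x \<bullet> w\<bar>) = ennreal (SUP x\<in>T. \<bar>x \<bullet> w\<bar>)"
proof -
  have "(SUP x\<in>T. ennreal \<bar>x \<bullet> w\<bar>) \<le> ennreal (SUP x\<in>T. \<bar>x \<bullet> w\<bar>)"
    using bdd_above_abs_inner[OF assms(1)] by (intro SUP_least ennreal_leI cSUP_upper)
  then have "(SUP x\<in>T. ennreal \<bar>x \<bullet> w\<bar>) \<noteq> \<top>"
    using ennreal_neq_top top_unique by metis
  then show ?thesis using assms(2) by (rule ennreal_SUP[symmetric])
qed

lemma abs_inner_le_twice_net:
  fixes T :: "'a::euclidean_space set"
  assumes "bounded T" "z \<in> T"
    and net: "\<And>z. z \<in> T \<Longrightarrow> \<exists>x\<in>N. 2 *\<^sub>R (z - x) \<in> convex hull (T \<union> uminus ` T)"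
    and N_le: "\<And>x. x \<in> N \<Longrightarrow> \<bar>x \<bullet> w\<bar> \<le> m"
  shows "\<bar>z \<bullet> w\<bar> \<le> 2 * m"
proof -
  define R where "R = (SUP x\<in>T. \<bar>x \<bullet> w\<bar>)"
  have le_R: "\<bar>x \<bullet> w\<bar> \<le> R" if "x \<in> T" for x
    unfolding R_def using that bdd_above_abs_inner[OF assms(1)] by (rule cSUP_upper)
  have hull_le_R: "\<bar>y \<bullet> w\<bar> \<le> R" if "y \<in> convex hull (T \<union> uminus ` T)" for y
    using that le_R by (auto intro: abs_inner_le_on_convex_hull[of "T \<union> uminus ` T"])
  have "\<bar>x \<bullet> w\<bar> \<le> m + R / 2" if x: "x \<in> T" for x
  proof -
    obtain y where "y \<in> N" "2 *\<^sub>R (x - y) \<in> convex hull (T \<union> uminus ` T)"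
      using net[OF x] by blast
    then have "\<bar>y \<bullet> w\<bar> \<le> m" "\<bar>(2 *\<^sub>R (x - y)) \<bullet> w\<bar> \<le> R"
      using N_le hull_le_R by blast+
    then show ?thesis by (simp add: inner_diff_left abs_le_iff)
  qed
  then have "R \<le> m + R / 2"
    unfolding R_def using assms(2) by (intro cSUP_least) auto
  then show ?thesis using le_R[OF assms(2)] by simp
qed

lemma SUP_abs_inner_powr_le_net:
  fixes T :: "'a::euclidean_space set"
  assumes "bounded T" "T \<noteq> {}" "finite N" "p > 0"
    and net: "\<And>z. z \<in> T \<Longrightarrow> \<exists>x\<in>N. 2 *\<^sub>R (z - x) \<in> convex hull (T \<union> uminus ` T)"
  shows "\<bar>SUP x\<in>T. \<bar>x \<bullet> w\<bar>\<bar> powr p \<le> 2 powr p * (\<Sum>x\<in>N. \<bar>x \<bullet> w\<bar> powr p)"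
proof -
  define m where "m = (\<Sum>x\<in>N. \<bar>x \<bullet> w\<bar> powr p) powr (1 / p)"
  have "\<bar>x \<bullet> w\<bar> \<le> m" if "x \<in> N" for x
  proof -
    have "\<bar>x \<bullet> w\<bar> powr p \<le> (\<Sum>x\<in>N. \<bar>x \<bullet> w\<bar> powr p)"
      using that assms(3) by (intro member_le_sum) auto
    then have "(\<bar>x \<bullet> w\<bar> powr p) powr (1 / p) \<le> m"
      unfolding m_def using \<open>p > 0\<close> by (intro powr_mono2) auto
    then show ?thesis using \<open>p > 0\<close> by (simp add: powr_powr)
  qed
  then have "(SUP x\<in>T. \<bar>x \<bullet> w\<bar>) \<le> 2 * m"
    using assms(2) by (intro cSUP_least abs_inner_le_twice_net[OF assms(1) _ net]) auto
  then have "\<bar>SUP x\<in>T. \<bar>x \<bullet> w\<bar>\<bar> powr p \<le> (2 * m) powr p"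
    using SUP_abs_inner_nonneg[OF assms(1,2)] \<open>p > 0\<close> by (intro powr_mono2) auto
  also have "\<dots> = 2 powr p * (\<Sum>x\<in>N. \<bar>x \<bullet> w\<bar> powr p)"
    using \<open>p > 0\<close> by (simp add: m_def powr_mult powr_powr sum_nonneg)
  finally show ?thesis .
qed

lemma SUP_closure_eq_SUP_dense:
  fixes f :: "'a::topological_space \<Rightarrow> 'b::{complete_linorder, linorder_topology}"
  assumes "continuous_on UNIV f" "D \<subseteq> T" "T \<subseteq> closure D"
  shows "(SUP x\<in>T. f x) = (SUP x\<in>D. f x)"
proof (rule antisym)
  have "closure D \<subseteq> {x. f x \<le> (SUP x\<in>D. f x)}"
    using assms(1) by (intro closure_minimal closed_Collect_le continuous_on_const) (auto intro: SUP_upper)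
  then show "(SUP x\<in>T. f x) \<le> (SUP x\<in>D. f x)"
    using assms(3) by (intro SUP_least) auto
qed (rule SUP_subset_mono[OF assms(2) order_refl])

lemma borel_measurable_SUP_abs_inner:
  fixes T :: "'b::euclidean_space set" and v :: "'a \<Rightarrow> 'b"
  assumes "\<And>x. (\<lambda>\<omega>. x \<bullet> v \<omega>) \<in> borel_measurable M"
  shows "(\<lambda>\<omega>. SUP x\<in>T. ennreal \<bar>x \<bullet> v \<omega>\<bar>) \<in> borel_measurable M"
proof -
  obtain D where "countable D" "D \<subseteq> T" "T \<subseteq> closure D" using separable by blast
  have "(SUP x\<in>T. ennreal \<bar>x \<bullet> v \<omega>\<bar>) = (SUP x\<in>D. ennreal \<bar>x \<bullet> v \<omega>\<bar>)" for \<omega>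
    using \<open>D \<subseteq> T\<close> \<open>T \<subseteq> closure D\<close>
    by (intro SUP_closure_eq_SUP_dense continuous_on_ennreal continuous_intros)
  moreover have "(\<lambda>\<omega>. ennreal \<bar>x \<bullet> v \<omega>\<bar>) \<in> borel_measurable M" for x
    using assms[of x] by measurable
  ultimately show ?thesis
    using \<open>countable D\<close> by (simp only:) (intro borel_measurable_SUP)
qed

lemma Lp_norm_SUP_abs_inner_le:
  fixes T :: "'b::euclidean_space set" and v :: "'a \<Rightarrow> 'b"
  assumes "bounded T" "span T = UNIV" "real DIM('b) \<le> p"
    and v_meas: "\<And>x. (\<lambda>\<omega>. x \<bullet> v \<omega>) \<in> borel_measurable M"
  shows "Lp_norm M p (\<lambda>\<omega>. SUP x\<in>T. \<bar>x \<bullet> v \<omega>\<bar>) \<le> 10 * (SUP x\<in>T. Lp_norm M p (\<lambda>\<omega>. x \<bullet> v \<omega>))"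
proof (cases "(SUP x\<in>T. Lp_norm M p (\<lambda>\<omega>. x \<bullet> v \<omega>)) = \<top>")
  case True
  then show ?thesis unfolding True by simp
next
  case False
  then obtain a where a: "(SUP x\<in>T. Lp_norm M p (\<lambda>\<omega>. x \<bullet> v \<omega>)) = ennreal a" "a \<ge> 0"
    by (cases "SUP x\<in>T. Lp_norm M p (\<lambda>\<omega>. x \<bullet> v \<omega>)") auto
  have "p > 0" using assms(3) DIM_positive[where 'a='b] by linarith
  obtain N where N: "N \<subseteq> T" "finite N" "card N \<le> 5 ^ DIM('b)"
    and net: "\<And>z. z \<in> T \<Longrightarrow> \<exists>x\<in>N. 2 *\<^sub>R (z - x) \<in> convex hull (T \<union> uminus ` T)"
    using symmetric_hull_net[OF assms(1,2)] by blast
  have "T \<noteq> {}" using assms(2) span_empty by blast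
  have Lp_N: "Lp_norm M p (\<lambda>\<omega>. x \<bullet> v \<omega>) \<le> ennreal a" if "x \<in> N" for x
    using that N(1) a(1) by (metis SUP_upper subsetD)
  have pointwise: "\<bar>SUP x\<in>T. \<bar>x \<bullet> v \<omega>\<bar>\<bar> powr p \<le> 2 powr p * (\<Sum>x\<in>N. \<bar>x \<bullet> v \<omega>\<bar> powr p)" for \<omega>
    using assms(1) \<open>T \<noteq> {}\<close> N(2) \<open>p > 0\<close> net by (rule SUP_abs_inner_powr_le_net)
  have "real (card N) powr (1 / p) \<le> 5"
  proof -
    have "real (card N) \<le> 5 ^ DIM('b)"
      using N(3) by (metis of_nat_le_iff of_nat_numeral of_nat_power)
    also have "\<dots> = 5 powr real DIM('b)" by (simp add: powr_realpow)
    also have "\<dots> \<le> 5 powr p" using assms(3) by (intro powr_mono) auto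
    finally have "real (card N) \<le> 5 powr p" .
    then show ?thesis using \<open>p > 0\<close> powr_inverse_le_iff by simp
  qed
  have "Lp_norm M p (\<lambda>\<omega>. SUP x\<in>T. \<bar>x \<bullet> v \<omega>\<bar>) \<le> ennreal (2 * real (card N) powr (1 / p) * a)"
    by (rule Lp_norm_le_of_powr_le_sum[OF N(2) \<open>p > 0\<close> _ a(2) v_meas Lp_N pointwise]) simp
  also have "\<dots> \<le> ennreal (10 * a)"
    using mult_right_mono[OF \<open>real (card N) powr (1 / p) \<le> 5\<close> a(2)] by (intro ennreal_leI) (simp add: mult.commute)
  finally show ?thesis using a by (simp add: ennreal_mult)
qed

theorem factA2:
  fixes M :: "'a measure" and p :: real
    and T :: "(real ^ 'n) set" and Z :: "'n \<Rightarrow> 'a \<Rightarrow> real"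
  assumes "prob_space M"
    and "p \<ge> 1"
    and "CARD('n) = nat \<lfloor>p\<rfloor>"
    and "bounded T"
    and "span T = UNIV"
    and "\<And>i. Z i \<in> borel_measurable M"
  shows "(\<integral>\<^sup>+ \<omega>. (SUP x\<in>T. ennreal \<bar>\<Sum>i\<in>UNIV. x $ i * Z i \<omega>\<bar>) \<partial>M)
           \<le> enn_powr (\<integral>\<^sup>+ \<omega>. enn_powr (SUP x\<in>T. ennreal \<bar>\<Sum>i\<in>UNIV. x $ i * Z i \<omega>\<bar>) p \<partial>M) (1 / p)
       \<and> enn_powr (\<integral>\<^sup>+ \<omega>. enn_powr (SUP x\<in>T. ennreal \<bar>\<Sum>i\<in>UNIV. x $ i * Z i \<omega>\<bar>) p \<partial>M) (1 / p)
           \<le> 10 * (SUP x\<in>T. Lp_norm M p (\<lambda>\<omega>. \<Sum>i\<in>UNIV. x $ i * Z i \<omega>))"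
proof -
  interpret prob_space M by fact
  define v where "v \<omega> = (\<chi> i. Z i \<omega>)" for \<omega>
  have sum_eq_inner: "(\<Sum>i\<in>UNIV. x $ i * Z i \<omega>) = x \<bullet> v \<omega>" for x \<omega>
    by (simp add: v_def inner_vec_def)
  have v_meas: "(\<lambda>\<omega>. x \<bullet> v \<omega>) \<in> borel_measurable M" for x
    using assms(6) by (simp flip: sum_eq_inner)
  define R where "R \<omega> = (SUP x\<in>T. \<bar>x \<bullet> v \<omega>\<bar>)" for \<omega>
  have "T \<noteq> {}" using assms(5) span_empty by blast
  have SUP_eq: "(SUP x\<in>T. ennreal \<bar>x \<bullet> v \<omega>\<bar>) = ennreal (R \<omega>)" for \<omega>
    unfolding R_def using assms(4) \<open>T \<noteq> {}\<close> by (rule ennreal_SUP_abs_inner)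
  have R_nonneg: "R \<omega> \<ge> 0" for \<omega>
    unfolding R_def using assms(4) \<open>T \<noteq> {}\<close> by (rule SUP_abs_inner_nonneg)
  have "R \<in> borel_measurable M"
    using borel_measurable_SUP_abs_inner[OF v_meas, of T] R_nonneg by (simp add: SUP_eq)
  then have "(\<integral>\<^sup>+ \<omega>. ennreal (R \<omega>) \<partial>M) \<le> Lp_norm M p R"
    using R_nonneg assms(2) by (rule nn_integral_le_Lp_norm)
  moreover have "Lp_norm M p R \<le> 10 * (SUP x\<in>T. Lp_norm M p (\<lambda>\<omega>. x \<bullet> v \<omega>))"
    unfolding R_def using assms(2,3,4,5) v_meas by (intro Lp_norm_SUP_abs_inner_le) auto
  moreover have "enn_powr (ennreal (R \<omega>)) p = ennreal (\<bar>R \<omega>\<bar> powr p)" for \<omega>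
    using R_nonneg by (simp add: enn_powr_ennreal)
  ultimately show ?thesis
    unfolding sum_eq_inner SUP_eq by (simp add: Lp_norm_def)
qed

end
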